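(* Let $N\geq1$, let $\mathcal{H}_{X_1},\dots,\mathcal{H}_{X_N}$ be finite-dimensional Hilbert spaces and let $\rho=|V\rangle\langle V|$ be a pure state on $\mathcal{H}_{X_1}\otimes\cdots\otimes\mathcal{H}_{X_N}$. For each $i$, let $\lambda^i_1\geq\lambda^i_2\geq\cdots$ be the eigenvalues of the reduced state $\rho_{X_i}$ in decreasing order and $|e^i_1\rangle,|e^i_2\rangle,\dots$ a corresponding orthonormal eigenbasis of $\mathcal{H}_{X_i}$ (so $\langle e^i_a|\rho_{X_i}|e^i_b\rangle=\lambda^i_a\delta_{ab}$). Write $|V\rangle=\sum_{x_1,\dots,x_N}V_{x_1\dots x_N}|e^1_{x_1}\rangle\otimes\cdots\otimes|e^N_{x_N}\rangle$, and set $\epsilon_i=1-\lambda^i_1$ and $\varepsilon=\sum_{i=1}^N\epsilon_i$. Then $$|V_{1\dots1}|^2\geq 1-\varepsilon.$$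
   Context: $\rho_{X_i}$ denotes the partial trace of $\rho$ over all tensor factors except $\mathcal{H}_{X_i}$. $V_{1\dots1}$ is the coefficient of $|e^1_1\rangle\otimes\cdots\otimes|e^N_1\rangle$. *)

theory Defs
  imports "HOL-Analysis.Analysis"
begin

text \<open>Concrete model: H_{X_i} = C^(d i) for i < N (0-based indices), with its standard
basis. A vector of the tensor product is a function on index tuples
x \<in> PiE {..<N} (\<lambda>i. {..<d i}), giving the coefficient in the standard product basis.\<close>

definition tuples :: "nat \<Rightarrow> (nat \<Rightarrow> nat) \<Rightarrow> (nat \<Rightarrow> nat) set" where
  "tuples N d = PiE {..<N} (\<lambda>i. {..<d i})"

text \<open>Matrix entry (a,b) of the reduced state rho_{X_i} = Tr_{all but i} |V><V|,
in the standard basis of C^(d i).\<close>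
definition reduced_state ::
  "nat \<Rightarrow> (nat \<Rightarrow> nat) \<Rightarrow> ((nat \<Rightarrow> nat) \<Rightarrow> complex) \<Rightarrow> nat \<Rightarrow> nat \<Rightarrow> nat \<Rightarrow> complex" where
  "reduced_state N d V i a b =
     (\<Sum>(x, y) \<in> {(x, y). x \<in> tuples N d \<and> y \<in> tuples N d \<and> x i = a \<and> y i = b \<and>
                          (\<forall>j<N. j \<noteq> i \<longrightarrow> x j = y j)}.
        V x * cnj (V y))"

definition orthonormal_basis_fin :: "nat \<Rightarrow> (nat \<Rightarrow> nat \<Rightarrow> complex) \<Rightarrow> bool" where
  "orthonormal_basis_fin n e \<longleftrightarrow>
     (\<forall>k<n. \<forall>l<n. (\<Sum>a<n. cnj (e k a) * e l a) = (if k = l then 1 else 0))"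

definition product_coeff ::
  "nat \<Rightarrow> (nat \<Rightarrow> nat) \<Rightarrow> (nat \<Rightarrow> nat \<Rightarrow> nat \<Rightarrow> complex) \<Rightarrow> ((nat \<Rightarrow> nat) \<Rightarrow> complex)
    \<Rightarrow> (nat \<Rightarrow> nat) \<Rightarrow> complex" where
  "product_coeff N d e V k =
     (\<Sum>x \<in> tuples N d. (\<Prod>i<N. cnj (e i (k i) (x i))) * V x)"

end

theory Submission
  imports Defs "Jordan_Normal_Form.Determinant"
begin

(*
  Expand V in the product basis e^1_(k_1) x ... x e^N_(k_N) with coefficients W_k.
  By Parseval the weights |W_k|^2 sum to 1, and the eigenvalue lambda^i_1, being the
  diagonal entry <e^i_1| rho_(X_i) |e^i_1>, is the total weight of the tuples with
  k_i = 1; so eps_i is the weight of the tuples with k_i <> 1. Every tuple other than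
  (1,...,1) has such a coordinate, so the union bound gives 1 - |W_(1...1)|^2 <= eps.
*)

lemma orthonormal_basis_fin_completeness:
  assumes "orthonormal_basis_fin n e" "a < n" "b < n"
  shows "(\<Sum>k<n. cnj (e k a) * e k b) = of_bool (a = b)"
proof -
  define A where "A = mat n n (\<lambda>(k, a). cnj (e k a))"
  define B where "B = mat n n (\<lambda>(a, k). e k a)"
  have A: "A \<in> carrier_mat n n" and B: "B \<in> carrier_mat n n"
    unfolding A_def B_def by auto
  have "A * B = 1\<^sub>m n"
  proof (rule eq_matI)
    fix k l assume kl: "k < dim_row (1\<^sub>m n :: complex mat)" "l < dim_col (1\<^sub>m n :: complex mat)"
    then have "(A * B) $$ (k, l) = (\<Sum>a<n. cnj (e k a) * e l a)"
      unfolding A_def B_def by (auto simp: scalar_prod_def intro!: sum.cong)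
    with assms(1) kl show "(A * B) $$ (k, l) = 1\<^sub>m n $$ (k, l)"
      unfolding orthonormal_basis_fin_def by auto
  qed (auto simp: A_def B_def)
  then have "B * A = 1\<^sub>m n"
    using mat_mult_left_right_inverse[OF A B] by blast
  moreover have "(B * A) $$ (a, b) = (\<Sum>k<n. e k a * cnj (e k b))"
    using assms unfolding A_def B_def by (auto simp: scalar_prod_def intro!: sum.cong)
  ultimately have "(\<Sum>k<n. e k a * cnj (e k b)) = (if a = b then 1 else 0)"
    using assms by simp
  then have "cnj (\<Sum>k<n. e k a * cnj (e k b)) = (if a = b then 1 else 0)"
    by simp
  then show ?thesis
    by (simp add: mult.commute)
qed

lemma eigenvalue_eq_quadratic_form:
  fixes M :: "nat \<Rightarrow> nat \<Rightarrow> complex"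
  assumes "(\<Sum>a<n. cnj (u a) * u a) = 1"
    and "\<forall>a<n. (\<Sum>b<n. M a b * u b) = c * u a"
  shows "(\<Sum>a<n. \<Sum>b<n. cnj (u a) * M a b * u b) = c"
proof -
  have "(\<Sum>a<n. \<Sum>b<n. cnj (u a) * M a b * u b) = (\<Sum>a<n. cnj (u a) * (c * u a))"
    using assms(2) by (simp add: mult.assoc sum_distrib_left[symmetric])
  also have "\<dots> = c"
    using assms(1) by (simp add: sum_distrib_left[symmetric] mult_ac)
  finally show ?thesis .
qed

lemma sum_le_sum_of_cover:
  fixes q :: "'a \<Rightarrow> real"
  assumes "finite K" "finite I"
    and "\<And>k. k \<in> K \<Longrightarrow> q k \<ge> 0"
    and "\<And>k. k \<in> K \<Longrightarrow> \<exists>i\<in>I. P i k"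
  shows "(\<Sum>k\<in>K. q k) \<le> (\<Sum>i\<in>I. \<Sum>k\<in>{k\<in>K. P i k}. q k)"
proof -
  have "(\<Sum>k\<in>K. q k) \<le> (\<Sum>k\<in>K. \<Sum>i\<in>{i\<in>I. P i k}. q k)"
  proof (rule sum_mono)
    fix k assume "k \<in> K"
    with assms obtain i where "i \<in> {i\<in>I. P i k}" "q k \<ge> 0" by blast
    then show "q k \<le> (\<Sum>i\<in>{i\<in>I. P i k}. q k)"
      using assms(2) by (intro member_le_sum) auto
  qed
  also have "\<dots> = (\<Sum>i\<in>I. \<Sum>k\<in>{k\<in>K. P i k}. q k)"
    using assms(1,2) by (rule sum.swap_restrict)
  finally show ?thesis .
qed

lemma finite_tuples: "finite (tuples N d)"
  unfolding tuples_def by (simp add: finite_PiE)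

lemma tuples_lessD: "x \<in> tuples N d \<Longrightarrow> j < N \<Longrightarrow> x j < d j"
  unfolding tuples_def by auto

lemma tuples_eq_iff:
  assumes "x \<in> tuples N d" "y \<in> tuples N d"
  shows "x = y \<longleftrightarrow> (\<forall>j<N. x j = y j)"
  using assms unfolding tuples_def by (auto simp: PiE_iff extensional_def fun_eq_iff) metis

lemma product_coeff_cong:
  assumes "\<And>j. j < N \<Longrightarrow> k j = k' j"
  shows "product_coeff N d e V k = product_coeff N d e V k'"
proof -
  have "(\<Prod>j<N. cnj (e j (k j) (x j))) = (\<Prod>j<N. cnj (e j (k' j) (x j)))" for x
    using assms by (intro prod.cong) auto
  then show ?thesis
    unfolding product_coeff_def by simp
qed

lemma sum_PiE_norm_sq_product_coeff:
  assumes "\<And>j. j < N \<Longrightarrow> finite (A j)"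
  shows "complex_of_real (\<Sum>k\<in>PiE {..<N} A. (cmod (product_coeff N d e V k))\<^sup>2) =
    (\<Sum>x\<in>tuples N d. \<Sum>y\<in>tuples N d. V x * cnj (V y) *
        (\<Prod>j<N. \<Sum>a\<in>A j. cnj (e j a (x j)) * e j a (y j)))"
proof -
  let ?K = "tuples N d"
  have "complex_of_real (\<Sum>k\<in>PiE {..<N} A. (cmod (product_coeff N d e V k))\<^sup>2) =
      (\<Sum>k\<in>PiE {..<N} A. \<Sum>x\<in>?K. \<Sum>y\<in>?K. V x * cnj (V y) *
        (\<Prod>j<N. cnj (e j (k j) (x j)) * e j (k j) (y j)))"
    unfolding of_real_sum complex_norm_square product_coeff_def
    by (intro sum.cong refl) (simp add: sum_product cnj_sum cnj_prod prod.distrib mult_ac)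
  also have "\<dots> = (\<Sum>x\<in>?K. \<Sum>y\<in>?K. \<Sum>k\<in>PiE {..<N} A. V x * cnj (V y) *
        (\<Prod>j<N. cnj (e j (k j) (x j)) * e j (k j) (y j)))"
    by (subst sum.swap) (intro sum.cong refl sum.swap)
  also have "\<dots> = (\<Sum>x\<in>?K. \<Sum>y\<in>?K. V x * cnj (V y) *
        (\<Prod>j<N. \<Sum>a\<in>A j. cnj (e j a (x j)) * e j a (y j)))"
    by (intro sum.cong refl, subst prod_sum_PiE) (use assms in \<open>auto simp: sum_distrib_left\<close>)
  finally show ?thesis .
qed

lemma prod_orthonormal_basis_fin_completeness:
  assumes "\<forall>i<N. orthonormal_basis_fin (d i) (e i)"
    and "x \<in> tuples N d" "y \<in> tuples N d" "J \<subseteq> {..<N}"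
  shows "(\<Prod>j\<in>J. \<Sum>a<d j. cnj (e j a (x j)) * e j a (y j)) = of_bool (\<forall>j\<in>J. x j = y j)"
proof -
  have "(\<Prod>j\<in>J. \<Sum>a<d j. cnj (e j a (x j)) * e j a (y j)) = (\<Prod>j\<in>J. of_bool (x j = y j))"
  proof (rule prod.cong)
    fix j assume "j \<in> J"
    with assms have "j < N" by auto
    with assms show "(\<Sum>a<d j. cnj (e j a (x j)) * e j a (y j)) = of_bool (x j = y j)"
      by (intro orthonormal_basis_fin_completeness) (auto intro: tuples_lessD)
  qed simp
  also have "\<dots> = of_bool (\<forall>j\<in>J. x j = y j)"
    using finite_subset[OF assms(4)] by auto
  finally show ?thesis .
qed

lemma sum_norm_sq_product_coeff:
  assumes "\<forall>i<N. orthonormal_basis_fin (d i) (e i)"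
  shows "(\<Sum>k\<in>tuples N d. (cmod (product_coeff N d e V k))\<^sup>2) = (\<Sum>x\<in>tuples N d. (cmod (V x))\<^sup>2)"
proof -
  let ?K = "tuples N d"
  have "complex_of_real (\<Sum>k\<in>?K. (cmod (product_coeff N d e V k))\<^sup>2) =
      (\<Sum>x\<in>?K. \<Sum>y\<in>?K. V x * cnj (V y) * (\<Prod>j<N. \<Sum>a<d j. cnj (e j a (x j)) * e j a (y j)))"
    using sum_PiE_norm_sq_product_coeff[of N "\<lambda>j. {..<d j}" d e V, folded tuples_def] by simp
  also have "\<dots> = (\<Sum>x\<in>?K. \<Sum>y\<in>?K. if x = y then V x * cnj (V y) else 0)"
    using assms by (intro sum.cong refl) (auto simp: prod_orthonormal_basis_fin_completeness tuples_eq_iff)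
  also have "\<dots> = complex_of_real (\<Sum>x\<in>?K. (cmod (V x))\<^sup>2)"
    by (simp add: finite_tuples complex_norm_square del: of_real_power)
  finally show ?thesis
    by (simp only: of_real_eq_iff)
qed

lemma reduced_state_quadratic_form:
  assumes "i < N"
  shows "(\<Sum>a<d i. \<Sum>b<d i. cnj (u a) * reduced_state N d V i a b * u b) =
    (\<Sum>x\<in>tuples N d. \<Sum>y\<in>tuples N d.
       of_bool (\<forall>j\<in>{..<N} - {i}. x j = y j) * V x * cnj (V y) * (cnj (u (x i)) * u (y i)))"
proof -
  let ?P = "tuples N d \<times> tuples N d"
  let ?agree = "\<lambda>p. \<forall>j\<in>{..<N} - {i}. fst p j = snd p j"
  let ?f = "\<lambda>a b p. if snd p i = b \<and> fst p i = a \<and> ?agree p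
      then V (fst p) * cnj (V (snd p)) * (cnj (u a) * u b) else 0"
  have "cnj (u a) * reduced_state N d V i a b * u b = (\<Sum>p\<in>?P. ?f a b p)" for a b
    unfolding reduced_state_def sum_distrib_left sum_distrib_right using finite_tuples
    by (intro sum.mono_neutral_cong_left) (auto simp: mult_ac split: if_splits)
  then have "(\<Sum>a<d i. \<Sum>b<d i. cnj (u a) * reduced_state N d V i a b * u b) =
      (\<Sum>a<d i. \<Sum>b<d i. \<Sum>p\<in>?P. ?f a b p)"
    by simp
  also have "\<dots> = (\<Sum>p\<in>?P. \<Sum>a<d i. \<Sum>b<d i. ?f a b p)"
    by (subst sum.swap) (intro sum.cong refl sum.swap)
  also have "\<dots> = (\<Sum>p\<in>?P.
       of_bool (?agree p) * V (fst p) * cnj (V (snd p)) * (cnj (u (fst p i)) * u (snd p i)))"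
    using assms by (intro sum.cong refl) (clarsimp simp: if_if_eq_conj[symmetric] tuples_lessD)
  finally show ?thesis
    by (simp add: sum.cartesian_product case_prod_beta)
qed

lemma reduced_state_diagonal_eq_sum_norm_sq:
  assumes bases: "\<forall>i<N. orthonormal_basis_fin (d i) (e i)"
    and "i < N" "l < d i"
  shows "(\<Sum>a<d i. \<Sum>b<d i. cnj (e i l a) * reduced_state N d V i a b * e i l b) =
    complex_of_real (\<Sum>k\<in>{k\<in>tuples N d. k i = l}. (cmod (product_coeff N d e V k))\<^sup>2)"
proof -
  let ?K = "tuples N d"
  let ?agree = "\<lambda>x y. \<forall>j\<in>{..<N} - {i}. x j = y j"
  define A where "A j = (if j = i then {l} else {..<d j})" for j
  have "(\<forall>j\<in>{..<N}. k j \<in> A j) \<longleftrightarrow> (\<forall>j\<in>{..<N}. k j \<in> {..<d j}) \<and> k i = l" for k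
    using assms(2,3) unfolding A_def by auto
  then have "{k\<in>?K. k i = l} = PiE {..<N} A"
    unfolding tuples_def set_eq_iff mem_Collect_eq PiE_iff by blast
  then have "complex_of_real (\<Sum>k\<in>{k\<in>?K. k i = l}. (cmod (product_coeff N d e V k))\<^sup>2) =
      (\<Sum>x\<in>?K. \<Sum>y\<in>?K. V x * cnj (V y) * (\<Prod>j<N. \<Sum>a\<in>A j. cnj (e j a (x j)) * e j a (y j)))"
    by (simp only:) (rule sum_PiE_norm_sq_product_coeff, simp add: A_def)
  also have "\<dots> = (\<Sum>x\<in>?K. \<Sum>y\<in>?K.
       of_bool (?agree x y) * V x * cnj (V y) * (cnj (e i l (x i)) * e i l (y i)))"
  proof (intro sum.cong refl)
    fix x y assume xy: "x \<in> ?K" "y \<in> ?K"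
    have "(\<Prod>j\<in>{..<N} - {i}. \<Sum>a\<in>A j. cnj (e j a (x j)) * e j a (y j)) =
        (\<Prod>j\<in>{..<N} - {i}. \<Sum>a<d j. cnj (e j a (x j)) * e j a (y j))"
      by (intro prod.cong refl) (simp add: A_def)
    also have "\<dots> = of_bool (?agree x y)"
      using bases xy by (intro prod_orthonormal_basis_fin_completeness) auto
    finally have "(\<Prod>j<N. \<Sum>a\<in>A j. cnj (e j a (x j)) * e j a (y j)) =
        cnj (e i l (x i)) * e i l (y i) * of_bool (?agree x y)"
      using assms(2) by (simp add: prod.remove[of "{..<N}" i] A_def)
    then show "V x * cnj (V y) * (\<Prod>j<N. \<Sum>a\<in>A j. cnj (e j a (x j)) * e j a (y j)) =
        of_bool (?agree x y) * V x * cnj (V y) * (cnj (e i l (x i)) * e i l (y i))"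
      by (simp add: mult_ac)
  qed
  also have "\<dots> = (\<Sum>a<d i. \<Sum>b<d i. cnj (e i l a) * reduced_state N d V i a b * e i l b)"
    using assms(2) by (rule reduced_state_quadratic_form[symmetric])
  finally show ?thesis
    by (rule sym)
qed

lemma eigenvalue_reduced_state_eq_sum_norm_sq:
  assumes bases: "\<forall>i<N. orthonormal_basis_fin (d i) (e i)"
    and eigen: "\<forall>a<d i. (\<Sum>b<d i. reduced_state N d V i a b * e i l b) = complex_of_real c * e i l a"
    and "i < N" "l < d i"
  shows "c = (\<Sum>k\<in>{k\<in>tuples N d. k i = l}. (cmod (product_coeff N d e V k))\<^sup>2)"
proof -
  have "(\<Sum>a<d i. cnj (e i l a) * e i l a) = 1"
    using bases assms(3,4) unfolding orthonormal_basis_fin_def by simp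
  then have "complex_of_real c = (\<Sum>a<d i. \<Sum>b<d i. cnj (e i l a) * reduced_state N d V i a b * e i l b)"
    using eigen by (rule eigenvalue_eq_quadratic_form[symmetric])
  also have "\<dots> = complex_of_real (\<Sum>k\<in>{k\<in>tuples N d. k i = l}. (cmod (product_coeff N d e V k))\<^sup>2)"
    using bases assms(3,4) by (rule reduced_state_diagonal_eq_sum_norm_sq)
  finally show ?thesis
    by (simp only: of_real_eq_iff)
qed

lemma one_minus_eigenvalue_reduced_state_eq_sum_norm_sq:
  assumes bases: "\<forall>i<N. orthonormal_basis_fin (d i) (e i)"
    and unit: "(\<Sum>x\<in>tuples N d. (cmod (V x))\<^sup>2) = 1"
    and eigen: "\<forall>a<d i. (\<Sum>b<d i. reduced_state N d V i a b * e i l b) = complex_of_real c * e i l a"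
    and "i < N" "l < d i"
  shows "1 - c = (\<Sum>k\<in>{k\<in>tuples N d. k i \<noteq> l}. (cmod (product_coeff N d e V k))\<^sup>2)"
proof -
  have "{k\<in>tuples N d. k i \<noteq> l} = tuples N d - {k\<in>tuples N d. k i = l}"
    by auto
  then show ?thesis
    using eigenvalue_reduced_state_eq_sum_norm_sq[OF bases eigen assms(4,5)]
      sum_norm_sq_product_coeff[OF bases, of V] unit finite_tuples
    by (simp add: sum_diff)
qed

theorem lemma1:
  fixes N :: nat and d :: "nat \<Rightarrow> nat"
    and V :: "(nat \<Rightarrow> nat) \<Rightarrow> complex"
    and e :: "nat \<Rightarrow> nat \<Rightarrow> nat \<Rightarrow> complex"
    and lam :: "nat \<Rightarrow> nat \<Rightarrow> real"
  assumes "N \<ge> 1"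
    and "\<forall>i<N. d i \<ge> 1"
    and "(\<Sum>x \<in> tuples N d. (cmod (V x))\<^sup>2) = 1"
    and "\<forall>i<N. orthonormal_basis_fin (d i) (e i)"
    and "\<forall>i<N. \<forall>k<d i. \<forall>a<d i.
           (\<Sum>b<d i. reduced_state N d V i a b * e i k b) = complex_of_real (lam i k) * e i k a"
    and "\<forall>i<N. \<forall>k l. k \<le> l \<and> l < d i \<longrightarrow> lam i l \<le> lam i k"
  shows "(cmod (product_coeff N d e V (\<lambda>_. 0)))\<^sup>2 \<ge> 1 - (\<Sum>i<N. 1 - lam i 0)"
proof -
  let ?K = "tuples N d"
  define q where "q k = (cmod (product_coeff N d e V k))\<^sup>2" for k
  define k0 where "k0 = restrict (\<lambda>_. 0::nat) {..<N}"
  have k0: "k0 \<in> ?K"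
    unfolding k0_def tuples_def using assms(2) by auto
  have "1 - q k0 = (\<Sum>k\<in>?K - {k0}. q k)"
    using sum_norm_sq_product_coeff[OF assms(4), of V] assms(3) k0 finite_tuples
    by (simp add: q_def sum_diff1)
  also have "\<dots> \<le> (\<Sum>i<N. \<Sum>k\<in>{k\<in>?K - {k0}. k i \<noteq> 0}. q k)"
  proof (rule sum_le_sum_of_cover)
    show "\<exists>i\<in>{..<N}. k i \<noteq> 0" if "k \<in> ?K - {k0}" for k
      using that k0 tuples_eq_iff[of k N d k0] by (auto simp: k0_def)
  qed (auto simp: q_def finite_tuples)
  also have "\<dots> \<le> (\<Sum>i<N. \<Sum>k\<in>{k\<in>?K. k i \<noteq> 0}. q k)"
    by (intro sum_mono sum_mono2) (auto simp: q_def finite_tuples)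
  also have "\<dots> = (\<Sum>i<N. 1 - lam i 0)"
  proof (rule sum.cong)
    fix i assume "i \<in> {..<N}"
    then have i: "i < N" and "0 < d i"
      using assms(2) by auto
    with assms(5) have "\<forall>a<d i. (\<Sum>b<d i. reduced_state N d V i a b * e i 0 b) =
        complex_of_real (lam i 0) * e i 0 a"
      by blast
    from one_minus_eigenvalue_reduced_state_eq_sum_norm_sq[OF assms(4,3) this i \<open>0 < d i\<close>]
    show "(\<Sum>k\<in>{k\<in>?K. k i \<noteq> 0}. q k) = 1 - lam i 0"
      unfolding q_def ..
  qed simp
  finally show ?thesis
    using product_coeff_cong[of N k0 "\<lambda>_. 0"] by (simp add: q_def k0_def)
qed

end
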